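(* (i) If $(\mathbf A,\mathbf b)\in\mathbb C^{m\times(d+1)}$ is affine phase retrievable for $\mathbb C^d$, then $m\ge 3d$. (ii) Let $B=(\mathbf a_1,\ldots,\mathbf a_d)\in\mathbb C^{d\times d}$ be nonsingular and set $\mathbf A=(B,B,B)^\top\in\mathbb C^{3d\times d}$. Let $\mathbf b=(b_{11},\ldots,b_{d1},b_{12},\ldots,b_{d2},b_{13},\ldots,b_{d3})^\top\in\mathbb C^{3d}$ be such that for each $1\le j\le d$ the points $b_{j1},b_{j2},b_{j3}$ are not collinear in $\mathbb C$. Then $(\mathbf A,\mathbf b)$ is affine phase retrievable for $\mathbb C^d$.
   Context: For $\mathbf u,\mathbf v\in\mathbb C^d$, $\langle\mathbf u,\mathbf v\rangle=\sum_i\overline{u_i}v_i$. A pair $(\mathbf A,\mathbf b)$ with $\mathbf A=(\mathbf a_1,\ldots,\mathbf a_m)^\top\in\mathbb C^{m\times d}$ and $\mathbf b=(b_1,\ldots,b_m)^\top\in\mathbb C^m$ (viewed as a matrix in $\mathbb C^{m\times(d+1)}$) is called affine phase retrievable for $\mathbb C^d$ if the map $\mathbf x\mapsto(|\langle\mathbf a_1,\mathbf x\rangle+b_1|,\ldots,|\langle\mathbf a_m,\mathbf x\rangle+b_m|)$ is injective on $\mathbb C^d$. *)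

theory Defs
  imports "HOL-Analysis.Analysis" "Jordan_Normal_Form.Determinant"
begin

definition row_cinner :: "complex mat \<Rightarrow> nat \<Rightarrow> complex Matrix.vec \<Rightarrow> complex" where
  "row_cinner A k x = (\<Sum>i<dim_col A. cnj (A $$ (k, i)) * x $ i)"

definition affine_phase_retrievable :: "complex mat \<Rightarrow> complex Matrix.vec \<Rightarrow> bool" where
  "affine_phase_retrievable A b \<longleftrightarrow>
     inj_on (\<lambda>x. vec (dim_row A) (\<lambda>k. cmod (row_cinner A k x + b $ k))) (carrier_vec (dim_col A))"

end

theory Submission
  imports Defs
begin

text \<open>
  (i) If (A, b) is affine phase retrievable, the linear part x \<mapsto> (\<langle>a_k, x\<rangle>)_k is injective,
  so some set S of at least d rows has trivial common kernel, and the equations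
  \<langle>a_k, p\<rangle> + b_k = 0 for k \<in> S can be solved simultaneously. On the remaining fewer than 2d rows
  the conditions Re (cnj \<langle>a_k, u\<rangle> (\<langle>a_k, p\<rangle> + b_k)) = 0 are fewer than 2d real-linear equations
  on \<complex>^d \<cong> \<real>^2d, so some u \<noteq> 0 satisfies all of them, and then p + u and p - u have the same
  measurements.

  (ii) The points of \<complex> equidistant from two distinct points lie on a line, so the three
  non-collinear shifts b_j1, b_j2, b_j3 determine \<langle>a_j, x\<rangle>; as B is nonsingular, these values
  determine x.
\<close>

lemma cmod_add_power2: "(cmod (z + c))\<^sup>2 = (cmod z)\<^sup>2 + 2 * Re (z * cnj c) + (cmod c)\<^sup>2"
  unfolding cmod_power2 by (simp add: power2_eq_square algebra_simps)

lemma Re_mult_cnj_eq_0_imp_real_multiple: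
  fixes w e :: complex
  assumes "w \<noteq> 0" "Re (w * cnj e) = 0"
  shows "e = Im (e / w) *\<^sub>R (\<i> * w)"
proof -
  have "Re (e / w) = Re (w * cnj e) / (cmod w)\<^sup>2"
    by (simp add: Re_divide cmod_power2 add_divide_distrib algebra_simps)
  hence "e / w = \<i> * complex_of_real (Im (e / w))"
    using assms by (simp add: complex_eq_iff)
  hence "e = \<i> * complex_of_real (Im (e / w)) * w"
    using assms by (simp add: divide_eq_eq)
  thus ?thesis by (simp add: scaleR_conv_of_real algebra_simps)
qed

lemma cmod_add_eq_noncollinear_imp_eq:
  fixes z z' c1 c2 c3 :: complex
  assumes "cmod (z + c1) = cmod (z' + c1)" "cmod (z + c2) = cmod (z' + c2)"
    "cmod (z + c3) = cmod (z' + c3)" and noncollinear: "\<not> collinear {c1, c2, c3}"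
  shows "z = z'"
proof (rule ccontr)
  assume "z \<noteq> z'"
  define w where "w = z - z'"
  have "w \<noteq> 0" using \<open>z \<noteq> z'\<close> by (simp add: w_def)
  define K where "K = ((cmod z')\<^sup>2 - (cmod z)\<^sup>2) / 2"
  have on_line: "Re (w * cnj c) = K" if "cmod (z + c) = cmod (z' + c)" for c
  proof -
    have "(cmod (z + c))\<^sup>2 = (cmod (z' + c))\<^sup>2" using that by simp
    thus ?thesis unfolding cmod_add_power2 w_def K_def by (simp add: algebra_simps)
  qed
  have "\<exists>t. x - y = t *\<^sub>R (\<i> * w)" if "x \<in> {c1, c2, c3}" "y \<in> {c1, c2, c3}" for x y
  proof -
    have "Re (w * cnj x) = K" "Re (w * cnj y) = K" using that on_line assms by auto
    hence "Re (w * cnj (x - y)) = 0" by (simp add: algebra_simps)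
    with Re_mult_cnj_eq_0_imp_real_multiple[OF \<open>w \<noteq> 0\<close>] show ?thesis by blast
  qed
  hence "collinear {c1, c2, c3}" unfolding collinear_def by blast
  with noncollinear show False ..
qed

lemma cmod_add_eq_cmod_diff:
  fixes c w :: complex
  assumes "Re (cnj w * c) = 0"
  shows "cmod (c + w) = cmod (c - w)"
proof -
  have "(cmod (c + w))\<^sup>2 = (cmod (c - w))\<^sup>2"
    using cmod_add_power2[of c w] cmod_add_power2[of c "- w"] assms by (simp add: mult.commute)
  thus ?thesis by (simp add: power2_eq_iff_nonneg)
qed

lemma exists_nonzero_vec_orthogonal:
  fixes f :: "'i \<Rightarrow> 'a::field Matrix.vec"
  assumes T: "finite T" "card T < n" and f: "\<forall>t\<in>T. f t \<in> carrier_vec n"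
  shows "\<exists>v\<in>carrier_vec n. v \<noteq> 0\<^sub>v n \<and> (\<forall>t\<in>T. f t \<bullet> v = 0)"
proof -
  obtain ts where ts: "set ts = T" "length ts = card T"
    using T(1) by (metis distinct_card finite_distinct_list)
  define r where "r i = (if i < card T then f (ts ! i) else 0\<^sub>v n)" for i
  define M where "M = mat\<^sub>r n n r"
  have "r \<in> {0..<n} \<rightarrow> carrier_vec n" using f ts by (auto simp: r_def intro!: nth_mem)
  moreover have "M = mat\<^sub>r n n (\<lambda>i. if i = n - 1 then 0\<^sub>v n else r i)"
    using T(2) by (auto simp: M_def r_def intro!: arg_cong[of _ _ "mat\<^sub>r n n"])
  ultimately have "det M = 0" using T(2) by (simp add: det_row_0)
  then obtain v where v: "v \<in> carrier_vec n" "v \<noteq> 0\<^sub>v n" "M *\<^sub>v v = 0\<^sub>v n"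
    using det_0_iff_vec_prod_zero_field[of M n] by (auto simp: M_def)
  have "f t \<bullet> v = 0" if "t \<in> T" for t
  proof -
    obtain i where i: "i < card T" "ts ! i = t" using \<open>t \<in> T\<close> ts by (metis in_set_conv_nth)
    have "(M *\<^sub>v v) $ i = f t \<bullet> v" using i T f \<open>t \<in> T\<close> by (simp add: M_def r_def)
    thus "f t \<bullet> v = 0" using v i T by simp
  qed
  with v show ?thesis by blast
qed

definition complexify :: "nat \<Rightarrow> real Matrix.vec \<Rightarrow> complex Matrix.vec" where
  "complexify n z = vec n (\<lambda>i. Complex (z $ i) (z $ (n + i)))"

lemma complexify_eq_0_iff:
  assumes "z \<in> carrier_vec (2 * n)"
  shows "complexify n z = 0\<^sub>v n \<longleftrightarrow> z = 0\<^sub>v (2 * n)"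
proof
  assume zero: "complexify n z = 0\<^sub>v n"
  have "Complex (z $ i) (z $ (n + i)) = 0" if "i < n" for i
    using arg_cong[OF zero, of "\<lambda>v. v $ i"] that by (simp add: complexify_def)
  hence "z $ i = 0 \<and> z $ (n + i) = 0" if "i < n" for i
    using that by (simp add: complex_eq_iff)
  hence "z $ i = 0" if "i < 2 * n" for i
    using that by (cases "i < n") (auto dest: meta_spec[of _ "i - n"])
  thus "z = 0\<^sub>v (2 * n)" using assms by (intro eq_vecI) auto
qed (auto simp: complexify_def complex_eq_iff intro!: eq_vecI)

lemma Re_cnj_scalar_prod_complexify:
  fixes f :: "complex Matrix.vec" and z :: "real Matrix.vec"
  assumes "f \<in> carrier_vec n" "z \<in> carrier_vec (2 * n)"
  shows "Re (cnj (f \<bullet> complexify n z) * c)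
    = vec (2 * n) (\<lambda>i. if i < n then Re (cnj (f $ i) * c) else Im (cnj (f $ (i - n)) * c)) \<bullet> z"
proof -
  have split: "{0..<2 * n} = {0..<n} \<union> {n..<n + n}" by auto
  have "vec (2 * n) (\<lambda>i. if i < n then Re (cnj (f $ i) * c) else Im (cnj (f $ (i - n)) * c)) \<bullet> z
    = (\<Sum>i<n. Re (cnj (f $ i) * c) * z $ i) + (\<Sum>i<n. Im (cnj (f $ i) * c) * z $ (n + i))"
    using assms sum.shift_bounds_nat_ivl[of "\<lambda>i. Im (cnj (f $ (i - n)) * c) * z $ i" 0 n n]
    by (simp add: scalar_prod_def split sum.union_disjoint lessThan_atLeast0 add.commute)
  also have "\<dots> = (\<Sum>i<n. Re (cnj (f $ i * Complex (z $ i) (z $ (n + i))) * c))"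
    by (simp add: sum.distrib[symmetric] algebra_simps)
  also have "\<dots> = Re (cnj (f \<bullet> complexify n z) * c)"
    using assms by (simp add: complexify_def scalar_prod_def sum_distrib_right Re_sum cnj_sum
        lessThan_atLeast0)
  finally show ?thesis by simp
qed

lemma exists_nonzero_vec_Re_orthogonal:
  fixes f :: "'i \<Rightarrow> complex Matrix.vec" and c :: "'i \<Rightarrow> complex"
  assumes T: "finite T" "card T < 2 * n" and f: "\<forall>t\<in>T. f t \<in> carrier_vec n"
  shows "\<exists>u\<in>carrier_vec n. u \<noteq> 0\<^sub>v n \<and> (\<forall>t\<in>T. Re (cnj (f t \<bullet> u) * c t) = 0)"
proof -
  define g where "g t = vec (2 * n)
    (\<lambda>i. if i < n then Re (cnj (f t $ i) * c t) else Im (cnj (f t $ (i - n)) * c t))" for t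
  obtain z where z: "z \<in> carrier_vec (2 * n)" "z \<noteq> 0\<^sub>v (2 * n)" "\<forall>t\<in>T. g t \<bullet> z = 0"
    using exists_nonzero_vec_orthogonal[OF T, of g] by (auto simp: g_def)
  have "complexify n z \<noteq> 0\<^sub>v n" using z complexify_eq_0_iff by blast
  moreover have "Re (cnj (f t \<bullet> complexify n z) * c t) = 0" if "t \<in> T" for t
    using Re_cnj_scalar_prod_complexify[of "f t" n z "c t"] f z that by (simp add: g_def)
  ultimately show ?thesis by (intro bexI[of _ "complexify n z"]) (auto simp: complexify_def)
qed

lemma exists_solvable_subsystem_with_same_kernel:
  fixes f :: "nat \<Rightarrow> 'a::field Matrix.vec" and c :: "nat \<Rightarrow> 'a"
  assumes f: "\<forall>k. f k \<in> carrier_vec d"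
  shows "\<exists>S p. S \<subseteq> {..<m} \<and> p \<in> carrier_vec d \<and> (\<forall>k\<in>S. f k \<bullet> p = c k)
     \<and> (\<forall>u\<in>carrier_vec d. (\<forall>k\<in>S. f k \<bullet> u = 0) \<longrightarrow> (\<forall>k<m. f k \<bullet> u = 0))"
proof (induction m)
  case 0
  show ?case by (rule exI[of _ "{}"], rule exI[of _ "0\<^sub>v d"]) auto
next
  case (Suc m)
  then obtain S p where S: "S \<subseteq> {..<m}" "p \<in> carrier_vec d" "\<forall>k\<in>S. f k \<bullet> p = c k"
    "\<forall>u\<in>carrier_vec d. (\<forall>k\<in>S. f k \<bullet> u = 0) \<longrightarrow> (\<forall>k<m. f k \<bullet> u = 0)" by blast
  show ?case
  proof (cases "\<forall>u\<in>carrier_vec d. (\<forall>k\<in>S. f k \<bullet> u = 0) \<longrightarrow> f m \<bullet> u = 0")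
    case True
    show ?thesis
      by (rule exI[of _ S], rule exI[of _ p]) (use S True in \<open>auto simp: less_Suc_eq\<close>)
  next
    case False
    then obtain u where u: "u \<in> carrier_vec d" "\<forall>k\<in>S. f k \<bullet> u = 0" "f m \<bullet> u \<noteq> 0" by blast
    \<comment> \<open>move p along u, which does not disturb the equations in S, until equation m holds\<close>
    define t where "t = (c m - f m \<bullet> p) / (f m \<bullet> u)"
    define p' where "p' = p + t \<cdot>\<^sub>v u"
    have lin: "f k \<bullet> p' = f k \<bullet> p + t * (f k \<bullet> u)" for k
      unfolding p'_def using f u(1) S(2)
      by (simp add: scalar_prod_add_distrib[of _ d] scalar_prod_smult_distrib[of _ d])
    show ?thesis
      by (rule exI[of _ "insert m S"], rule exI[of _ p'])
        (use S u lin f in \<open>auto simp: less_Suc_eq p'_def t_def\<close>)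
  qed
qed

lemma row_cinner_add:
  assumes "x \<in> carrier_vec (dim_col A)" "y \<in> carrier_vec (dim_col A)"
  shows "row_cinner A k (x + y) = row_cinner A k x + row_cinner A k y"
  using assms unfolding row_cinner_def by (simp add: distrib_left sum.distrib)

lemma row_cinner_diff:
  assumes "x \<in> carrier_vec (dim_col A)" "y \<in> carrier_vec (dim_col A)"
  shows "row_cinner A k (x - y) = row_cinner A k x - row_cinner A k y"
  using assms unfolding row_cinner_def by (simp add: right_diff_distrib sum_subtractf)

lemma row_cinner_zero: "row_cinner A k (0\<^sub>v (dim_col A)) = 0"
  unfolding row_cinner_def by simp

lemma row_cinner_conv_scalar_prod:
  assumes "k < dim_row A" "x \<in> carrier_vec (dim_col A)"
  shows "row_cinner A k x = conjugate (row A k) \<bullet> x"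
  using assms unfolding row_cinner_def scalar_prod_def
  by (auto simp: lessThan_atLeast0 intro!: sum.cong)

lemma row_cinner_eq_imp_eq:
  fixes M :: "complex mat"
  assumes M: "M \<in> carrier_mat d d" "det M \<noteq> 0" and x: "x \<in> carrier_vec d" and y: "y \<in> carrier_vec d"
    and eq: "\<forall>j<d. row_cinner M j x = row_cinner M j y"
  shows "x = y"
proof -
  have "M *\<^sub>v conjugate (x - y) = 0\<^sub>v d"
  proof (rule eq_vecI)
    fix j assume "j < dim_vec (0\<^sub>v d :: complex Matrix.vec)"
    hence j: "j < d" by simp
    have "(M *\<^sub>v conjugate (x - y)) $ j = row M j \<bullet> conjugate (x - y)"
      using j M by simp
    also have "\<dots> = conjugate (conjugate (row M j) \<bullet> (x - y))"
      using j M x y by (intro conjugate_conjugate_sprod[of _ d, symmetric]) auto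
    also have "\<dots> = conjugate (row_cinner M j (x - y))"
      using j M x y by (subst row_cinner_conv_scalar_prod) auto
    also have "\<dots> = 0"
      using row_cinner_diff[of x M y j] eq j M x y by simp
    finally show "(M *\<^sub>v conjugate (x - y)) $ j = 0\<^sub>v d $ j"
      using j by simp
  qed (use M in simp)
  moreover have "conjugate (x - y) \<in> carrier_vec d" using x y by simp
  ultimately have "conjugate (x - y) = 0\<^sub>v d"
    using det_0_iff_vec_prod_zero[OF M(1)] M(2) by blast
  hence "(x - y) $ i = 0" if "i < d" for i
    using arg_cong[of _ _ "\<lambda>v. v $ i", OF \<open>conjugate (x - y) = 0\<^sub>v d\<close>] that y by simp
  thus ?thesis using x y by (intro eq_vecI) auto
qed

lemma affine_phase_retrievable_kernel_trivial:
  fixes b :: "complex Matrix.vec"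
  assumes apr: "affine_phase_retrievable A b" and A: "A \<in> carrier_mat m d"
    and u: "u \<in> carrier_vec d" and ker: "\<forall>k<m. row_cinner A k u = 0"
  shows "u = 0\<^sub>v d"
proof -
  have "row_cinner A k u = row_cinner A k (0\<^sub>v d)" if "k < m" for k
    using ker that row_cinner_zero[of A k] A by simp
  hence "vec m (\<lambda>k. cmod (row_cinner A k u + b $ k)) = vec m (\<lambda>k. cmod (row_cinner A k (0\<^sub>v d) + b $ k))"
    by (intro eq_vecI) auto
  with apr A u show ?thesis
    unfolding affine_phase_retrievable_def by (auto dest: inj_onD)
qed

lemma not_affine_phase_retrievable_if_Re_orthogonal:
  fixes b :: "complex Matrix.vec"
  assumes A: "A \<in> carrier_mat m d" and p: "p \<in> carrier_vec d"
    and u: "u \<in> carrier_vec d" "u \<noteq> 0\<^sub>v d"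
    and orth: "\<forall>k<m. Re (cnj (row_cinner A k u) * (row_cinner A k p + b $ k)) = 0"
  shows "\<not> affine_phase_retrievable A b"
proof
  assume "affine_phase_retrievable A b"
  hence inj: "inj_on (\<lambda>x. vec m (\<lambda>k. cmod (row_cinner A k x + b $ k))) (carrier_vec d)"
    using A unfolding affine_phase_retrievable_def by simp
  have "cmod (row_cinner A k (p + u) + b $ k) = cmod (row_cinner A k (p - u) + b $ k)"
    if "k < m" for k
    using cmod_add_eq_cmod_diff[OF orth[rule_format, OF that]] A p u
    by (simp add: row_cinner_add row_cinner_diff algebra_simps)
  hence "vec m (\<lambda>k. cmod (row_cinner A k (p + u) + b $ k))
      = vec m (\<lambda>k. cmod (row_cinner A k (p - u) + b $ k))"
    by (intro eq_vecI) auto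
  hence sum_eq_diff: "p + u = p - u"
    by (rule inj_onD[OF inj]) (use p u in auto)
  have "u $ i = 0" if "i < d" for i
    using arg_cong[of _ _ "\<lambda>v. v $ i", OF sum_eq_diff] that p u carrier_vecD[OF u(1)] by simp
  with u show False by (auto intro!: eq_vecI)
qed

lemma affine_phase_retrievable_imp_three_d_le:
  fixes b :: "complex Matrix.vec"
  assumes A: "A \<in> carrier_mat m d" and apr: "affine_phase_retrievable A b"
  shows "3 * d \<le> m"
proof (rule ccontr)
  assume "\<not> 3 * d \<le> m"
  define f where "f k = conjugate (row A k)" for k
  have f: "\<forall>k. f k \<in> carrier_vec d" using A by (auto simp: f_def intro!: carrier_vecI)
  have row_cinner_f: "row_cinner A k x = f k \<bullet> x" if "k < m" "x \<in> carrier_vec d" for k x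
    using row_cinner_conv_scalar_prod[of k A x] that A by (simp add: f_def)
  obtain S p where S: "S \<subseteq> {..<m}" and p: "p \<in> carrier_vec d" "\<forall>k\<in>S. f k \<bullet> p = - b $ k"
    and same_kernel: "\<forall>u\<in>carrier_vec d. (\<forall>k\<in>S. f k \<bullet> u = 0) \<longrightarrow> (\<forall>k<m. f k \<bullet> u = 0)"
    using exists_solvable_subsystem_with_same_kernel[OF f, of m "\<lambda>k. - b $ k"] by blast
  have "finite S" using S finite_subset by blast
  have "d \<le> card S"
  proof (rule ccontr)
    assume "\<not> d \<le> card S"
    then obtain v where "v \<in> carrier_vec d" "v \<noteq> 0\<^sub>v d" "\<forall>k\<in>S. f k \<bullet> v = 0"
      using exists_nonzero_vec_orthogonal[OF \<open>finite S\<close>, of d f] f by auto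
    with same_kernel row_cinner_f affine_phase_retrievable_kernel_trivial[OF apr A] show False
      by auto
  qed
  define T where "T = {..<m} - S"
  have "card T < 2 * d"
    using \<open>\<not> 3 * d \<le> m\<close> \<open>d \<le> card S\<close> S \<open>finite S\<close> by (simp add: T_def card_Diff_subset)
  then obtain u where u: "u \<in> carrier_vec d" "u \<noteq> 0\<^sub>v d"
    and orth_T: "\<forall>k\<in>T. Re (cnj (f k \<bullet> u) * (f k \<bullet> p + b $ k)) = 0"
    using exists_nonzero_vec_Re_orthogonal[of T d f "\<lambda>k. f k \<bullet> p + b $ k"] f by (auto simp: T_def)
  have "Re (cnj (row_cinner A k u) * (row_cinner A k p + b $ k)) = 0" if "k < m" for k
    using that orth_T p u row_cinner_f by (cases "k \<in> S") (auto simp: T_def)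
  with not_affine_phase_retrievable_if_Re_orthogonal[OF A p(1) u] apr show False by blast
qed

lemma row_cinner_stacked:
  assumes "k < 3 * d" "B \<in> carrier_mat d d"
  shows "row_cinner (mat (3 * d) d (\<lambda>(k, i). B $$ (i, k mod d))) k x
    = row_cinner (transpose_mat B) (k mod d) x"
  using assms unfolding row_cinner_def by (auto intro!: sum.cong)

lemma affine_phase_retrievable_stacked:
  fixes B :: "complex mat" and b :: "complex Matrix.vec"
  assumes B: "B \<in> carrier_mat d d" "det B \<noteq> 0"
    and noncollinear: "\<forall>j<d. \<not> collinear {b $ j, b $ (d + j), b $ (2 * d + j)}"
  shows "affine_phase_retrievable (mat (3 * d) d (\<lambda>(k, i). B $$ (i, k mod d))) b"
  unfolding affine_phase_retrievable_def
proof (rule inj_onI)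
  let ?A = "mat (3 * d) d (\<lambda>(k, i). B $$ (i, k mod d))"
  fix x y assume x: "x \<in> carrier_vec (dim_col ?A)" and y: "y \<in> carrier_vec (dim_col ?A)"
    and eq: "vec (dim_row ?A) (\<lambda>k. cmod (row_cinner ?A k x + b $ k))
      = vec (dim_row ?A) (\<lambda>k. cmod (row_cinner ?A k y + b $ k))"
  have eq_k: "cmod (row_cinner (transpose_mat B) j x + b $ k)
      = cmod (row_cinner (transpose_mat B) j y + b $ k)" if "k < 3 * d" "j = k mod d" for j k
    using arg_cong[of _ _ "\<lambda>v. v $ k", OF eq] that row_cinner_stacked[OF that(1) B(1)] by simp
  have "row_cinner (transpose_mat B) j x = row_cinner (transpose_mat B) j y" if "j < d" for j
    using cmod_add_eq_noncollinear_imp_eq[OF eq_k eq_k eq_k noncollinear[rule_format, OF that]]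
      that by simp
  with B x y show "x = y"
    by (intro row_cinner_eq_imp_eq[of "transpose_mat B" d]) (auto simp: det_transpose)
qed

theorem theorem3p3:
  shows "(\<forall>(m::nat) (d::nat) (A::complex mat) (b::complex Matrix.vec).
            A \<in> carrier_mat m d \<longrightarrow> b \<in> carrier_vec m \<longrightarrow>
            affine_phase_retrievable A b \<longrightarrow> m \<ge> 3 * d)
       \<and> (\<forall>(d::nat) (B::complex mat) (b::complex Matrix.vec).
            B \<in> carrier_mat d d \<longrightarrow> det B \<noteq> 0 \<longrightarrow> b \<in> carrier_vec (3 * d) \<longrightarrow>
            (\<forall>j<d. \<not> collinear {b $ j, b $ (d + j), b $ (2 * d + j)}) \<longrightarrow>
            affine_phase_retrievable (mat (3 * d) d (\<lambda>(k, i). B $$ (i, k mod d))) b)"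
  using affine_phase_retrievable_imp_three_d_le affine_phase_retrievable_stacked by blast

end
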